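(* Let $X,Y$ be mm-spaces and $F\in\mathcal F^2$. Then for every $\kappa\in(0,1)$ and $\kappa'\in(0,1/4)$, $$\mathrm{OD}(X\times_F Y;-2(\kappa+\kappa'))\le 4F(\mathrm{OD}(X;-\kappa),0)+8F(0,\mathrm{OD}(Y;-\kappa')).$$
   Context: An mm-space is a triple $(X,d_X,m_X)$ with $(X,d_X)$ complete separable metric space and $m_X$ a Borel probability measure. $\mathcal F^2$ is the set of continuous functions $F\colon[0,+\infty)^2\to[0,+\infty)$ such that for any metric spaces $(X,d_X),(Y,d_Y)$, $d_F((x,y),(x',y')):=F(d_X(x,x'),d_Y(y,y'))$ is a metric on $X\times Y$; $X\times_FY:=(X\times Y,d_F,m_X\otimes m_Y)$. Partial diameter: $\mathrm{PD}(X;\alpha)$ = infimum of $\operatorname{diam}A$ over Borel $A$ with $m_X(A)\ge\alpha$. Observable diameter: $\mathrm{OD}(X;-\kappa):=\sup_f\mathrm{PD}((\mathbb R,|\cdot|,f_*m_X);1-\kappa)$ over 1-Lipschitz $f\colon X\to\mathbb R$. *)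

theory Defs
  imports "HOL-Analysis.Analysis" "HOL-Probability.Probability"
begin

definition borel_sets_metric :: "'a set \<Rightarrow> ('a \<Rightarrow> 'a \<Rightarrow> real) \<Rightarrow> 'a set set" where
  "borel_sets_metric S d = sigma_sets S {U. openin (Metric_space.mtopology S d) U}"

definition mm_space :: "'a set \<Rightarrow> ('a \<Rightarrow> 'a \<Rightarrow> real) \<Rightarrow> 'a measure \<Rightarrow> bool" where
  "mm_space S d m \<longleftrightarrow>
     Metric_space S d \<and> Metric_space.mcomplete S d \<and>
     separable_space (Metric_space.mtopology S d) \<and>
     space m = S \<and> sets m = borel_sets_metric S d \<and> prob_space m"

definition prod_metric ::
  "(real \<Rightarrow> real \<Rightarrow> real) \<Rightarrow> ('a \<Rightarrow> 'a \<Rightarrow> real) \<Rightarrow> ('b \<Rightarrow> 'b \<Rightarrow> real)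
     \<Rightarrow> ('a \<times> 'b) \<Rightarrow> ('a \<times> 'b) \<Rightarrow> real" where
  "prod_metric F dX dY p q = F (dX (fst p) (fst q)) (dY (snd p) (snd q))"

text \<open>The class F^2. Metric spaces are quantified over carriers that are subsets of the
  reals with arbitrary metric functions.\<close>
definition F2 :: "(real \<Rightarrow> real \<Rightarrow> real) set" where
  "F2 = {F. continuous_on ({0..} \<times> {0..}) (\<lambda>(s,t). F s t) \<and>
            (\<forall>s\<ge>0. \<forall>t\<ge>0. F s t \<ge> 0) \<and>
            (\<forall>(S::real set) dS (T::real set) dT.
               Metric_space S dS \<and> Metric_space T dT \<longrightarrow>
               Metric_space (S \<times> T) (prod_metric F dS dT))}"

definition diam_of :: "('a \<Rightarrow> 'a \<Rightarrow> real) \<Rightarrow> 'a set \<Rightarrow> ereal" where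
  "diam_of d A = Sup ({0} \<union> {ereal (d x y) | x y. x \<in> A \<and> y \<in> A})"

definition partial_diam :: "('a \<Rightarrow> 'a \<Rightarrow> real) \<Rightarrow> 'a measure \<Rightarrow> real \<Rightarrow> ereal" where
  "partial_diam d m \<alpha> = Inf {diam_of d A | A. A \<in> sets m \<and> measure m A \<ge> \<alpha>}"

definition obs_diam :: "'a set \<Rightarrow> ('a \<Rightarrow> 'a \<Rightarrow> real) \<Rightarrow> 'a measure \<Rightarrow> real \<Rightarrow> ereal" where
  "obs_diam S d m \<kappa> =
     (SUP f \<in> {f. f \<in> borel_measurable m \<and> (\<forall>x\<in>S. \<forall>y\<in>S. \<bar>f x - f y\<bar> \<le> d x y)}.
        partial_diam (\<lambda>a b. \<bar>a - b\<bar>) (distr m borel f) (1 - \<kappa>))"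

end

(* Let f be 1-Lipschitz on X \<times>\<^sub>F Y. A set of measure > \<kappa> in X has an r-neighbourhood of measure
   \<ge> 1 - \<kappa> whenever OD(X; -\<kappa>) < r, since the distance to that set is 1-Lipschitz. Applied to
   {g \<le> med g + \<eta>} and {g > med g - \<eta>}, this shows that any g which oscillates by at most C on
   r-balls stays within C + \<eta> of its median on a set of measure \<ge> 1 - 2\<kappa>. The triangle inequality
   of d_F on a three-point space gives F(s,0) \<le> 2 F(r,0) for s \<le> 2r, so each section f(-,y) is
   within 2 F(r,0) + \<eta> of its median M y on a set of measure \<ge> 1 - 2\<kappa>. The median M is
   F(0,-)-Lipschitz, hence within 2 F(0,r') + \<eta> of its own median N on a set of measure \<ge> 1 - 2\<kappa>'.
   By Fubini, f stays within 2 F(r,0) + 2 F(0,r') + 2\<eta> of N with probability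
   (1 - 2\<kappa>)(1 - 2\<kappa>') \<ge> 1 - 2(\<kappa> + \<kappa>'); letting r, r', \<eta> tend to OD(X), OD(Y), 0 and using
   continuity of F gives the bound, even with 4 in place of 8. *)

theory Submission
  imports Defs
begin

section \<open>Partial and observable diameters\<close>

lemma
  assumes "mm_space S d m"
  shows mm_space_Metric_space: "Metric_space S d"
    and mm_space_prob_space: "prob_space m"
    and mm_space_space: "space m = S"
  using assms by (simp_all add: mm_space_def)

lemma mm_space_borel_measurable_continuous:
  fixes h :: "'a \<Rightarrow> real"
  assumes mm: "mm_space S d m"
    and cont: "\<And>x e. x \<in> S \<Longrightarrow> 0 < e \<Longrightarrow> \<exists>\<delta>>0. \<forall>y\<in>S. d x y < \<delta> \<longrightarrow> \<bar>h y - h x\<bar> < e"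
  shows "h \<in> borel_measurable m"
proof (rule borel_measurableI)
  fix U :: "real set" assume U: "open U"
  interpret Metric_space S d by (rule mm_space_Metric_space[OF mm])
  have "openin mtopology (h -` U \<inter> S)"
    unfolding openin_mtopology
  proof (intro conjI allI impI)
    fix x assume x: "x \<in> h -` U \<inter> S"
    then obtain e where e: "e > 0" "ball (h x) e \<subseteq> U" using U open_contains_ball by blast
    then obtain \<delta> where "\<delta> > 0" "\<forall>y\<in>S. d x y < \<delta> \<longrightarrow> \<bar>h y - h x\<bar> < e" using cont x by blast
    then show "\<exists>r>0. mball x r \<subseteq> h -` U \<inter> S"
      using e by (intro exI[of _ \<delta>]) (auto simp: dist_real_def abs_minus_commute subset_iff)
  qed auto
  with mm show "h -` U \<inter> space m \<in> sets m"
    by (auto simp: mm_space_def borel_sets_metric_def intro: sigma_sets.Basic)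
qed

lemma mm_space_borel_measurable_lipschitz:
  fixes h :: "'a \<Rightarrow> real"
  assumes mm: "mm_space S d m" and lip: "\<And>x y. x \<in> S \<Longrightarrow> y \<in> S \<Longrightarrow> \<bar>h x - h y\<bar> \<le> d x y"
  shows "h \<in> borel_measurable m"
proof (rule mm_space_borel_measurable_continuous[OF mm])
  interpret Metric_space S d by (rule mm_space_Metric_space[OF mm])
  fix x and e :: real assume "x \<in> S" "0 < e"
  then show "\<exists>\<delta>>0. \<forall>y\<in>S. d x y < \<delta> \<longrightarrow> \<bar>h y - h x\<bar> < e"
    using lip commute by (intro exI[of _ e]) (auto intro: le_less_trans)
qed

lemma diam_of_ge: "x \<in> A \<Longrightarrow> y \<in> A \<Longrightarrow> ereal (d x y) \<le> diam_of d A"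
  unfolding diam_of_def by (rule Sup_upper) blast

lemma diam_of_nonneg: "0 \<le> diam_of d A"
  unfolding diam_of_def by (rule Sup_upper) blast

lemma diam_of_empty: "diam_of d {} = 0"
  by (simp add: diam_of_def)

lemma diam_of_interval_le:
  "0 \<le> w \<Longrightarrow> diam_of (\<lambda>a b. \<bar>a - b\<bar>) {c - w .. c + w} \<le> ereal (2 * w)"
  unfolding diam_of_def by (intro Sup_least) auto

lemma partial_diam_le: "A \<in> sets \<mu> \<Longrightarrow> \<alpha> \<le> measure \<mu> A \<Longrightarrow> partial_diam d \<mu> \<alpha> \<le> diam_of d A"
  unfolding partial_diam_def by (rule Inf_lower) blast

lemma partial_diam_nonneg: "0 \<le> partial_diam d \<mu> \<alpha>"
  unfolding partial_diam_def by (rule Inf_greatest) (auto simp: diam_of_nonneg)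

lemma partial_diam_lessE:
  assumes "partial_diam d \<mu> \<alpha> < \<rho>"
  obtains A where "A \<in> sets \<mu>" "\<alpha> \<le> measure \<mu> A" "diam_of d A < \<rho>"
  using assms unfolding partial_diam_def by (auto simp: Inf_less_iff)

lemma partial_diam_distr_le_interval:
  assumes f: "f \<in> borel_measurable m" and w: "0 \<le> w"
    and \<alpha>: "\<alpha> \<le> measure m {x\<in>space m. \<bar>f x - c\<bar> \<le> w}"
  shows "partial_diam (\<lambda>a b. \<bar>a - b\<bar>) (distr m borel f) \<alpha> \<le> ereal (2 * w)"
proof -
  have "{x\<in>space m. \<bar>f x - c\<bar> \<le> w} = f -` {c - w .. c + w} \<inter> space m"
    by (auto simp: abs_le_iff)
  with f \<alpha> have "\<alpha> \<le> measure (distr m borel f) {c - w .. c + w}"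
    by (simp add: measure_distr)
  then have "partial_diam (\<lambda>a b. \<bar>a - b\<bar>) (distr m borel f) \<alpha> \<le> diam_of (\<lambda>a b. \<bar>a - b\<bar>) {c - w .. c + w}"
    by (intro partial_diam_le) auto
  also have "\<dots> \<le> ereal (2 * w)"
    by (rule diam_of_interval_le[OF w])
  finally show ?thesis .
qed

lemma obs_diam_ge:
  "f \<in> borel_measurable m \<Longrightarrow> (\<forall>x\<in>S. \<forall>y\<in>S. \<bar>f x - f y\<bar> \<le> d x y) \<Longrightarrow>
   partial_diam (\<lambda>a b. \<bar>a - b\<bar>) (distr m borel f) (1 - \<kappa>) \<le> obs_diam S d m \<kappa>"
  unfolding obs_diam_def by (rule SUP_upper) blast

lemma obs_diam_le:
  "(\<And>f. f \<in> borel_measurable m \<Longrightarrow> \<forall>x\<in>S. \<forall>y\<in>S. \<bar>f x - f y\<bar> \<le> d x y \<Longrightarrow>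
     partial_diam (\<lambda>a b. \<bar>a - b\<bar>) (distr m borel f) (1 - \<kappa>) \<le> B) \<Longrightarrow> obs_diam S d m \<kappa> \<le> B"
  unfolding obs_diam_def by (rule SUP_least) blast

lemma obs_diam_nonneg:
  assumes "Metric_space S d" shows "0 \<le> obs_diam S d m \<kappa>"
proof -
  interpret Metric_space S d by (rule assms)
  have "0 \<le> partial_diam (\<lambda>a b. \<bar>a - b\<bar>) (distr m borel (\<lambda>_. 0::real)) (1 - \<kappa>)"
    by (rule partial_diam_nonneg)
  also have "\<dots> \<le> obs_diam S d m \<kappa>"
    by (rule obs_diam_ge) auto
  finally show ?thesis .
qed

lemma obs_diam_nonpos: "1 \<le> \<kappa> \<Longrightarrow> obs_diam S d m \<kappa> \<le> 0"
  by (rule obs_diam_le) (metis diam_of_empty partial_diam_le diff_le_0_iff_le measure_empty sets.empty_sets)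

lemma obs_diam_finite:
  assumes mm: "mm_space S d m" and \<kappa>: "0 < \<kappa>"
  shows "obs_diam S d m \<kappa> < \<infinity>"
proof -
  interpret Metric_space S d by (rule mm_space_Metric_space[OF mm])
  interpret prob_space m by (rule mm_space_prob_space[OF mm])
  have sp: "space m = S" by (rule mm_space_space[OF mm])
  obtain x0 where x0: "x0 \<in> S" using not_empty sp by auto
  have dist_x0: "(\<lambda>x. d x0 x) \<in> borel_measurable m"
    by (rule mm_space_borel_measurable_lipschitz[OF mm])
      (use x0 triangle commute in \<open>force simp: abs_le_iff\<close>)
  define B where "B n = {x\<in>space m. d x0 x \<le> real n}" for n :: nat
  have "(\<lambda>n. measure m (B n)) \<longlonglongrightarrow> measure m (\<Union>n. B n)"
    using dist_x0 unfolding B_def by (intro finite_Lim_measure_incseq) (auto simp: incseq_def)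
  moreover have "(\<Union>n. B n) = space m"
    unfolding B_def by (auto intro: real_arch_simple)
  ultimately have "(\<lambda>n. measure m (B n)) \<longlonglongrightarrow> 1"
    by (simp add: prob_space)
  then have "\<forall>\<^sub>F n in sequentially. 1 - \<kappa> < measure m (B n)"
    using \<kappa> by (intro order_tendstoD(1)) auto
  then obtain n where n: "1 - \<kappa> < measure m (B n)"
    by (auto simp: eventually_sequentially)
  have "obs_diam S d m \<kappa> \<le> ereal (2 * real n)"
  proof (rule obs_diam_le)
    fix f assume f: "f \<in> borel_measurable m" "\<forall>x\<in>S. \<forall>y\<in>S. \<bar>f x - f y\<bar> \<le> d x y"
    have "B n \<subseteq> {x\<in>space m. \<bar>f x - f x0\<bar> \<le> real n}"
      using f(2) x0 commute unfolding B_def sp by fastforce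
    then have "measure m (B n) \<le> measure m {x\<in>space m. \<bar>f x - f x0\<bar> \<le> real n}"
      using f(1) by (intro finite_measure_mono) auto
    with n show "partial_diam (\<lambda>a b. \<bar>a - b\<bar>) (distr m borel f) (1 - \<kappa>) \<le> ereal (2 * real n)"
      by (intro partial_diam_distr_le_interval[where c = "f x0"] f(1)) auto
  qed
  then show ?thesis
    using le_less_trans by fastforce
qed

section \<open>Concentration about the median\<close>

definition infdist_of :: "('a \<Rightarrow> 'a \<Rightarrow> real) \<Rightarrow> 'a set \<Rightarrow> 'a \<Rightarrow> real" where
  "infdist_of d A x = (INF y\<in>A. d x y)"

context Metric_space
begin

lemma infdist_of_le: "x \<in> M \<Longrightarrow> y \<in> A \<Longrightarrow> A \<subseteq> M \<Longrightarrow> infdist_of d A x \<le> d x y"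
  unfolding infdist_of_def by (rule cINF_lower) (auto intro: bdd_belowI2[of _ 0])

lemma infdist_of_nonneg: "x \<in> M \<Longrightarrow> A \<noteq> {} \<Longrightarrow> A \<subseteq> M \<Longrightarrow> 0 \<le> infdist_of d A x"
  unfolding infdist_of_def by (rule cINF_greatest) auto

lemma infdist_of_less_iff:
  "x \<in> M \<Longrightarrow> A \<noteq> {} \<Longrightarrow> A \<subseteq> M \<Longrightarrow> infdist_of d A x < r \<longleftrightarrow> (\<exists>y\<in>A. d x y < r)"
  unfolding infdist_of_def by (rule cINF_less_iff) (auto intro: bdd_belowI2[of _ 0])

lemma infdist_of_lipschitz:
  assumes "x \<in> M" "x' \<in> M" "A \<noteq> {}" "A \<subseteq> M"
  shows "\<bar>infdist_of d A x - infdist_of d A x'\<bar> \<le> d x x'"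
proof -
  have "infdist_of d A x \<le> infdist_of d A x' + d x x'" if "x \<in> M" "x' \<in> M" for x x'
  proof -
    have "infdist_of d A x - d x x' \<le> infdist_of d A x'"
      unfolding infdist_of_def[of _ _ x']
    proof (rule cINF_greatest)
      fix y assume "y \<in> A"
      with that assms(4) have "infdist_of d A x \<le> d x x' + d x' y"
        by (meson infdist_of_le order_trans subsetD triangle)
      then show "infdist_of d A x - d x x' \<le> d x' y" by simp
    qed (use assms(3) in auto)
    then show ?thesis by simp
  qed
  from this[of x x'] this[of x' x] assms(1,2) show ?thesis
    by (auto simp: commute)
qed

end

lemma obs_diam_thickening:
  assumes mm: "mm_space S d m" and OD: "obs_diam S d m \<kappa> < ereal r"
    and A: "A \<in> sets m" "0 \<le> \<kappa>" "\<kappa> < measure m A"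
  obtains B where "B \<in> sets m" "1 - \<kappa> \<le> measure m B" "\<And>x. x \<in> B \<Longrightarrow> \<exists>y\<in>A. d x y < r"
proof -
  interpret Metric_space S d by (rule mm_space_Metric_space[OF mm])
  interpret prob_space m by (rule mm_space_prob_space[OF mm])
  have sp: "space m = S" by (rule mm_space_space[OF mm])
  have AS: "A \<subseteq> S" using sets.sets_into_space[OF A(1)] sp by simp
  have ne: "A \<noteq> {}" using A by auto
  let ?h = "infdist_of d A"
  have lip: "\<forall>x\<in>S. \<forall>y\<in>S. \<bar>?h x - ?h y\<bar> \<le> d x y"
    using infdist_of_lipschitz[OF _ _ ne AS] by blast
  have hm: "?h \<in> borel_measurable m"
    using mm_space_borel_measurable_lipschitz[OF mm] lip by blast
  have "partial_diam (\<lambda>a b. \<bar>a - b\<bar>) (distr m borel ?h) (1 - \<kappa>) < ereal r"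
    using obs_diam_ge[OF hm lip] OD by (rule le_less_trans)
  then obtain I where I: "I \<in> sets borel" "1 - \<kappa> \<le> measure (distr m borel ?h) I"
    "diam_of (\<lambda>a b. \<bar>a - b\<bar>) I < r"
    by (rule partial_diam_lessE) simp
  define B where "B = ?h -` I \<inter> space m"
  have B: "B \<in> sets m" "1 - \<kappa> \<le> measure m B"
    using hm I(1,2) by (auto simp: B_def measure_distr)
  \<comment> \<open>B has measure at least 1 - \<kappa> and A more than \<kappa>, so they meet; there the distance to A is 0.\<close>
  have "B \<inter> A \<noteq> {}"
  proof
    assume "B \<inter> A = {}"
    then have "measure m B + measure m A = measure m (B \<union> A)"
      using B(1) A(1) by (simp add: finite_measure_Union)
    with prob_le_1[of "B \<union> A"] B(2) A(3) show False by linarith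
  qed
  then obtain x0 where x0: "x0 \<in> B" "x0 \<in> A" by blast
  have hx0: "?h x0 = 0"
    using infdist_of_le[of x0 x0 A] infdist_of_nonneg[of x0 A] x0 AS ne by auto
  show thesis
  proof (rule that[OF B])
    fix x assume x: "x \<in> B"
    then have xS: "x \<in> S" using sp B_def by auto
    have "ereal \<bar>?h x - ?h x0\<bar> \<le> diam_of (\<lambda>a b. \<bar>a - b\<bar>) I"
      using x x0 B_def by (intro diam_of_ge) auto
    with I(3) have "ereal \<bar>?h x - ?h x0\<bar> < ereal r"
      by (blast intro: le_less_trans)
    then have "?h x < r"
      using hx0 infdist_of_nonneg[OF xS ne AS] by simp
    then show "\<exists>y\<in>A. d x y < r"
      using infdist_of_less_iff[OF xS ne AS] by blast
  qed
qed

definition median :: "real measure \<Rightarrow> real" where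
  "median \<mu> = Inf {t. 1/2 \<le> cdf \<mu> t}"

context real_distribution
begin

lemma median_cdf_bounds:
  assumes \<eta>: "0 < \<eta>"
  shows median_cdf_ge: "1/2 \<le> cdf M (median M + \<eta>)"
    and median_cdf_less: "cdf M (median M - \<eta>) < 1/2"
proof -
  define K where "K = {t. 1/2 \<le> cdf M t}"
  have "\<forall>\<^sub>F t in at_top. 1/2 < cdf M t"
    using order_tendstoD(1)[OF cdf_lim_at_top_prob, of "1/2"] by simp
  then have ne: "K \<noteq> {}"
    unfolding K_def eventually_at_top_linorder by (metis empty_iff less_le mem_Collect_eq order_refl)
  have "\<forall>\<^sub>F t in at_bot. cdf M t < 1/2"
    using order_tendstoD(2)[OF cdf_lim_at_bot, of "1/2"] by simp
  then obtain N where "\<And>t. t \<le> N \<Longrightarrow> cdf M t < 1/2"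
    by (auto simp: eventually_at_bot_linorder)
  then have bdd: "bdd_below K"
    by (intro bdd_belowI[of _ N]) (metis K_def linorder_not_le mem_Collect_eq order_less_imp_le not_less)
  have med: "median M = Inf K" by (simp add: median_def K_def)
  obtain t where "t \<in> K" "t < median M + \<eta>"
    using cInf_less_iff[OF ne bdd, of "Inf K + \<eta>"] \<eta> med by auto
  then show "1/2 \<le> cdf M (median M + \<eta>)"
    using cdf_nondecreasing[of t "median M + \<eta>"] by (auto simp: K_def)
  show "cdf M (median M - \<eta>) < 1/2"
  proof (rule ccontr)
    assume "\<not> cdf M (median M - \<eta>) < 1/2"
    then have "median M \<le> median M - \<eta>"
      using cInf_lower[OF _ bdd, of "median M - \<eta>"] by (simp add: med K_def)
    with \<eta> show False by simp
  qed
qed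

end

lemma median_le_shift:
  assumes \<mu>1: "real_distribution \<mu>1" and \<mu>2: "real_distribution \<mu>2"
    and cdf: "\<And>t. cdf \<mu>2 t \<le> cdf \<mu>1 (t + c)"
  shows "median \<mu>1 \<le> median \<mu>2 + c"
proof (rule ccontr)
  assume "\<not> median \<mu>1 \<le> median \<mu>2 + c"
  define \<delta> where "\<delta> = (median \<mu>1 - median \<mu>2 - c) / 2"
  have \<delta>: "0 < \<delta>" using \<open>\<not> median \<mu>1 \<le> median \<mu>2 + c\<close> by (simp add: \<delta>_def)
  have "1/2 \<le> cdf \<mu>2 (median \<mu>2 + \<delta>)"
    by (rule real_distribution.median_cdf_ge[OF \<mu>2 \<delta>])
  also have "\<dots> \<le> cdf \<mu>1 (median \<mu>2 + \<delta> + c)"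
    by (rule cdf)
  also have "median \<mu>2 + \<delta> + c = median \<mu>1 - \<delta>"
    by (simp add: \<delta>_def field_simps)
  finally show False
    using real_distribution.median_cdf_less[OF \<mu>1 \<delta>] by simp
qed

lemma (in prob_space) cdf_distr:
  "g \<in> borel_measurable M \<Longrightarrow> cdf (distr M borel g) t = prob {x\<in>space M. g x \<le> t}"
  unfolding cdf_def by (simp add: measure_distr vimage_def Int_def conj_commute)

lemma (in prob_space) median_distr_dist_le:
  assumes g: "g \<in> borel_measurable M" and h: "h \<in> borel_measurable M"
    and c: "\<And>x. x \<in> space M \<Longrightarrow> \<bar>g x - h x\<bar> \<le> c"
  shows "\<bar>median (distr M borel g) - median (distr M borel h)\<bar> \<le> c"
proof -
  have shift: "median (distr M borel g) \<le> median (distr M borel h) + c"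
    if g: "g \<in> borel_measurable M" and h: "h \<in> borel_measurable M"
      and c: "\<And>x. x \<in> space M \<Longrightarrow> g x \<le> h x + c" for g h
  proof (rule median_le_shift)
    fix t
    have "prob {x\<in>space M. h x \<le> t} \<le> prob {x\<in>space M. g x \<le> t + c}"
      using g c by (intro finite_measure_mono) (force, measurable)
    then show "cdf (distr M borel h) t \<le> cdf (distr M borel g) (t + c)"
      by (simp add: cdf_distr g h)
  qed (simp_all add: g h real_distribution_distr)
  from shift[OF g h] shift[OF h g] c show ?thesis
    by (force simp: abs_le_iff)
qed

lemma concentration_about_median:
  assumes mm: "mm_space S d m" and \<kappa>: "0 \<le> \<kappa>" "\<kappa> < 1/2" and OD: "obs_diam S d m \<kappa> < ereal r"
    and g: "g \<in> borel_measurable m" and osc: "\<And>x x'. x \<in> S \<Longrightarrow> x' \<in> S \<Longrightarrow> d x x' < r \<Longrightarrow> \<bar>g x - g x'\<bar> \<le> C"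
    and \<eta>: "0 < \<eta>"
  shows "1 - 2 * \<kappa> \<le> measure m {x\<in>S. \<bar>g x - median (distr m borel g)\<bar> \<le> C + \<eta>}"
proof -
  interpret prob_space m by (rule mm_space_prob_space[OF mm])
  have sp: "space m = S" by (rule mm_space_space[OF mm])
  define \<mu> where "\<mu> = distr m borel g"
  interpret \<mu>: real_distribution \<mu>
    unfolding \<mu>_def using g by (intro real_distribution_distr) simp
  let ?M = "median \<mu>"
  define A1 where "A1 = {x\<in>space m. g x \<le> ?M + \<eta>}"
  define A2 where "A2 = {x\<in>space m. ?M - \<eta> < g x}"
  have A: "A1 \<in> sets m" "A2 \<in> sets m" unfolding A1_def A2_def using g by measurable
  have "A2 = space m - {x\<in>space m. g x \<le> ?M - \<eta>}"
    by (auto simp: A2_def)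
  then have "measure m A1 = cdf \<mu> (?M + \<eta>)" "measure m A2 = 1 - cdf \<mu> (?M - \<eta>)"
    using g by (simp_all add: A1_def \<mu>_def cdf_distr prob_compl)
  then have "\<kappa> < measure m A1" "\<kappa> < measure m A2"
    using \<mu>.median_cdf_ge[OF \<eta>] \<mu>.median_cdf_less[OF \<eta>] \<kappa> by simp_all
  then obtain B1 B2 where B1: "B1 \<in> sets m" "1 - \<kappa> \<le> measure m B1" "\<And>x. x \<in> B1 \<Longrightarrow> \<exists>y\<in>A1. d x y < r"
    and B2: "B2 \<in> sets m" "1 - \<kappa> \<le> measure m B2" "\<And>x. x \<in> B2 \<Longrightarrow> \<exists>y\<in>A2. d x y < r"
    using obs_diam_thickening[OF mm OD A(1) \<kappa>(1)] obs_diam_thickening[OF mm OD A(2) \<kappa>(1)] by metis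
  have "measure m (B1 \<union> B2) = measure m B1 + measure m B2 - measure m (B1 \<inter> B2)"
    using B1(1) B2(1) by (intro measure_Un3) (auto simp: fmeasurable_eq_sets)
  with prob_le_1[of "B1 \<union> B2"] B1(2) B2(2) have "1 - 2 * \<kappa> \<le> measure m (B1 \<inter> B2)"
    by linarith
  also have "\<dots> \<le> measure m {x\<in>S. \<bar>g x - ?M\<bar> \<le> C + \<eta>}"
  proof (rule finite_measure_mono)
    show "B1 \<inter> B2 \<subseteq> {x\<in>S. \<bar>g x - ?M\<bar> \<le> C + \<eta>}"
    proof
      fix x assume x: "x \<in> B1 \<inter> B2"
      then have xS: "x \<in> S" using B1(1) sets.sets_into_space sp by blast
      obtain y1 y2 where "y1 \<in> A1" "d x y1 < r" "y2 \<in> A2" "d x y2 < r"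
        using B1(3) B2(3) x by blast
      with osc[OF xS] show "x \<in> {x\<in>S. \<bar>g x - ?M\<bar> \<le> C + \<eta>}"
        using xS by (fastforce simp: A1_def A2_def sp abs_le_iff)
    qed
    show "{x\<in>S. \<bar>g x - ?M\<bar> \<le> C + \<eta>} \<in> sets m"
      using g unfolding sp[symmetric] by measurable
  qed
  finally show ?thesis by (simp add: \<mu>_def)
qed

section \<open>The class \<open>F2\<close>\<close>

lemma F2_metric:
  "F \<in> F2 \<Longrightarrow> Metric_space (S::real set) dS \<Longrightarrow> Metric_space (T::real set) dT \<Longrightarrow>
   Metric_space (S \<times> T) (prod_metric F dS dT)"
  unfolding F2_def by blast

lemma F2_nonneg: "F \<in> F2 \<Longrightarrow> 0 \<le> s \<Longrightarrow> 0 \<le> t \<Longrightarrow> 0 \<le> F s t"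
  unfolding F2_def by blast

lemma F2_continuous_on: "F \<in> F2 \<Longrightarrow> continuous_on ({0..} \<times> {0..}) (\<lambda>(s, t). F s t)"
  unfolding F2_def by blast

lemma Metric_space_singleton: "Metric_space {0::real} (\<lambda>_ _. 0)"
  by unfold_locales auto

lemma Metric_space_three_points:
  "0 < s \<Longrightarrow> 0 < r \<Longrightarrow> s \<le> 2 * r \<Longrightarrow>
   Metric_space {0, 1, 2::real} (\<lambda>x y. if x = y then 0 else if x = 1 \<or> y = 1 then r else s)"
  by unfold_locales auto

lemma F2_zero: "F \<in> F2 \<Longrightarrow> F 0 0 = 0"
  using Metric_space.mdist_zero[OF F2_metric[OF _ Metric_space_singleton Metric_space_singleton],
      of F "(0, 0)"]
  by (simp add: prod_metric_def)

lemma F2_double_fst: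
  assumes F: "F \<in> F2" and s: "0 \<le> s" "s \<le> 2 * r" and r: "0 < r"
  shows "F s 0 \<le> 2 * F r 0"
proof (cases "s = 0")
  case True
  then show ?thesis using F2_zero[OF F] F2_nonneg[OF F, of r 0] r by simp
next
  case False
  let ?d = "\<lambda>x y::real. if x = y then 0 else if x = 1 \<or> y = 1 then r else s"
  interpret Metric_space "{0, 1, 2::real} \<times> {0::real}" "prod_metric F ?d (\<lambda>_ _. 0)"
    using F2_metric[OF F Metric_space_three_points Metric_space_singleton] s r False by simp
  from triangle[of "(0, 0)" "(1, 0)" "(2, 0)"] show ?thesis
    by (simp add: prod_metric_def)
qed

lemma F2_double_snd:
  assumes F: "F \<in> F2" and s: "0 \<le> s" "s \<le> 2 * r" and r: "0 < r"
  shows "F 0 s \<le> 2 * F 0 r"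
proof (cases "s = 0")
  case True
  then show ?thesis using F2_zero[OF F] F2_nonneg[OF F, of 0 r] r by simp
next
  case False
  let ?d = "\<lambda>x y::real. if x = y then 0 else if x = 1 \<or> y = 1 then r else s"
  interpret Metric_space "{0::real} \<times> {0, 1, 2::real}" "prod_metric F (\<lambda>_ _. 0) ?d"
    using F2_metric[OF F Metric_space_singleton Metric_space_three_points] s r False by simp
  from triangle[of "(0, 0)" "(0, 1)" "(0, 2)"] show ?thesis
    by (simp add: prod_metric_def)
qed

lemma F2_tendsto:
  assumes F: "F \<in> F2" and "0 \<le> s" "0 \<le> t" and "(u \<longlongrightarrow> s) G" "(v \<longlongrightarrow> t) G"
    and "\<forall>\<^sub>F x in G. 0 \<le> u x \<and> 0 \<le> v x"
  shows "((\<lambda>x. F (u x) (v x)) \<longlongrightarrow> F s t) G"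
  using continuous_on_tendsto_compose[OF F2_continuous_on[OF F] tendsto_Pair[OF assms(4,5)]] assms(2,3,6)
  by simp

section \<open>Products\<close>

lemma (in pair_prob_space) measure_ge_sections:
  assumes E: "E \<in> sets (M1 \<Otimes>\<^sub>M M2)" and D: "D \<in> sets M2" and \<alpha>: "0 \<le> \<alpha>"
    and sections: "\<And>y. y \<in> D \<Longrightarrow> \<alpha> \<le> measure M1 ((\<lambda>x. (x, y)) -` E)"
  shows "\<alpha> * measure M2 D \<le> measure (M1 \<Otimes>\<^sub>M M2) E"
proof -
  have "ennreal (\<alpha> * measure M2 D) = (\<integral>\<^sup>+y. ennreal \<alpha> * indicator D y \<partial>M2)"
    using D \<alpha> by (simp add: nn_integral_cmult_indicator M2.emeasure_eq_measure ennreal_mult)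
  also have "\<dots> \<le> (\<integral>\<^sup>+y. emeasure M1 ((\<lambda>x. (x, y)) -` E) \<partial>M2)"
    using sections by (intro nn_integral_mono) (auto simp: indicator_def M1.emeasure_eq_measure)
  also have "\<dots> = emeasure (M1 \<Otimes>\<^sub>M M2) E"
    by (rule emeasure_pair_measure_alt2[OF E, symmetric])
  finally show ?thesis
    by (simp add: emeasure_eq_measure ennreal_le_iff)
qed

lemma (in pair_prob_space) measure_concentration_via_sections:
  fixes f :: "'a \<times> 'b \<Rightarrow> real"
  assumes f: "f \<in> borel_measurable (M1 \<Otimes>\<^sub>M M2)" and g: "g \<in> borel_measurable M2" and \<alpha>: "0 \<le> \<alpha>"
    and sections: "\<And>y. y \<in> space M2 \<Longrightarrow> \<alpha> \<le> measure M1 {x\<in>space M1. \<bar>f (x, y) - g y\<bar> \<le> c1}"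
    and \<beta>: "\<beta> \<le> measure M2 {y\<in>space M2. \<bar>g y - c\<bar> \<le> c2}"
  shows "\<alpha> * \<beta> \<le> measure (M1 \<Otimes>\<^sub>M M2) {p\<in>space (M1 \<Otimes>\<^sub>M M2). \<bar>f p - c\<bar> \<le> c1 + c2}"
proof -
  define D where "D = {y\<in>space M2. \<bar>g y - c\<bar> \<le> c2}"
  define E where "E = {p\<in>space (M1 \<Otimes>\<^sub>M M2). \<bar>f p - g (snd p)\<bar> \<le> c1 \<and> \<bar>g (snd p) - c\<bar> \<le> c2}"
  have "E \<in> sets (M1 \<Otimes>\<^sub>M M2)" "D \<in> sets M2"
    using f g unfolding E_def D_def by measurable
  then have "\<alpha> * measure M2 D \<le> measure (M1 \<Otimes>\<^sub>M M2) E"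
  proof (rule measure_ge_sections[OF _ _ \<alpha>])
    fix y assume "y \<in> D"
    then have "(\<lambda>x. (x, y)) -` E = {x\<in>space M1. \<bar>f (x, y) - g y\<bar> \<le> c1}"
      by (auto simp: E_def D_def space_pair_measure)
    with \<open>y \<in> D\<close> show "\<alpha> \<le> measure M1 ((\<lambda>x. (x, y)) -` E)"
      using sections by (simp add: D_def)
  qed
  moreover have "\<alpha> * \<beta> \<le> \<alpha> * measure M2 D"
    using \<beta> \<alpha> by (simp add: D_def mult_left_mono)
  moreover have "measure (M1 \<Otimes>\<^sub>M M2) E
      \<le> measure (M1 \<Otimes>\<^sub>M M2) {p\<in>space (M1 \<Otimes>\<^sub>M M2). \<bar>f p - c\<bar> \<le> c1 + c2}"
    using f by (intro finite_measure_mono) (auto simp: E_def, measurable)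
  ultimately show ?thesis
    by linarith
qed

definition section_median :: "'a measure \<Rightarrow> ('a \<times> 'b \<Rightarrow> real) \<Rightarrow> 'b \<Rightarrow> real" where
  "section_median m f y = median (distr m borel (\<lambda>x. f (x, y)))"

lemma section_median_dist_le:
  assumes mmX: "mm_space S dX mX" and f: "f \<in> borel_measurable (mX \<Otimes>\<^sub>M mY)"
    and lip: "\<forall>p\<in>S \<times> T. \<forall>q\<in>S \<times> T. \<bar>f p - f q\<bar> \<le> prod_metric F dX dY p q"
    and y: "y \<in> T" "y' \<in> T" "T = space mY"
  shows "\<bar>section_median mX f y - section_median mX f y'\<bar> \<le> F 0 (dY y y')"
proof -
  interpret X: Metric_space S dX by (rule mm_space_Metric_space[OF mmX])
  interpret prob_space mX by (rule mm_space_prob_space[OF mmX])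
  have "\<bar>f (x, y) - f (x, y')\<bar> \<le> F 0 (dY y y')" if "x \<in> S" for x
    using lip y that by (force simp: prod_metric_def)
  with y f show ?thesis
    unfolding section_median_def
    by (intro median_distr_dist_le) (auto simp: mm_space_space[OF mmX] measurable_Pair1')
qed

lemma F2_lipschitz_measurable:
  assumes mm: "mm_space T d m" and F: "F \<in> F2"
    and lip: "\<And>y y'. y \<in> T \<Longrightarrow> y' \<in> T \<Longrightarrow> \<bar>g y - g y'\<bar> \<le> F 0 (d y y')"
  shows "g \<in> borel_measurable m"
proof (rule mm_space_borel_measurable_continuous[OF mm])
  interpret Metric_space T d by (rule mm_space_Metric_space[OF mm])
  fix y and e :: real assume y: "y \<in> T" and e: "0 < e"
  have "((\<lambda>t. F 0 t) \<longlongrightarrow> F 0 0) (at_right 0)"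
    by (intro F2_tendsto[OF F] tendsto_intros)
      (auto intro: eventually_mono[OF eventually_at_right_less[of "0::real"]])
  then obtain \<delta> where \<delta>: "0 < \<delta>" "\<And>t. 0 < t \<Longrightarrow> t < \<delta> \<Longrightarrow> \<bar>F 0 t\<bar> < e"
    using e by (auto simp: tendsto_iff eventually_at_right_field dist_real_def F2_zero[OF F])
  have "\<bar>g y' - g y\<bar> < e" if "y' \<in> T" "d y y' < \<delta>" for y'
  proof -
    have "F 0 (d y y') < e"
      using \<delta>(2)[of "d y y'"] nonneg[of y y'] that e
      by (cases "d y y' = 0") (auto simp: F2_zero[OF F])
    with lip[OF y that(1)] show ?thesis
      by (simp add: abs_minus_commute)
  qed
  with \<delta>(1) show "\<exists>\<delta>>0. \<forall>y'\<in>T. d y y' < \<delta> \<longrightarrow> \<bar>g y' - g y\<bar> < e"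
    by blast
qed

lemma partial_diam_pair_le:
  assumes mmX: "mm_space S dX mX" and mmY: "mm_space T dY mY" and F: "F \<in> F2"
    and \<kappa>: "0 \<le> \<kappa>" "\<kappa> < 1/2" and \<kappa>': "0 \<le> \<kappa>'" "\<kappa>' < 1/2"
    and ODX: "obs_diam S dX mX \<kappa> < ereal r" and ODY: "obs_diam T dY mY \<kappa>' < ereal r'"
    and \<eta>: "0 < \<eta>" and f: "f \<in> borel_measurable (mX \<Otimes>\<^sub>M mY)"
    and lip: "\<forall>p\<in>S \<times> T. \<forall>q\<in>S \<times> T. \<bar>f p - f q\<bar> \<le> prod_metric F dX dY p q"
  shows "partial_diam (\<lambda>a b. \<bar>a - b\<bar>) (distr (mX \<Otimes>\<^sub>M mY) borel f) (1 - 2 * (\<kappa> + \<kappa>'))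
           \<le> ereal (4 * F r 0 + 4 * F 0 r' + 4 * \<eta>)"
proof -
  interpret X: Metric_space S dX by (rule mm_space_Metric_space[OF mmX])
  interpret Y: Metric_space T dY by (rule mm_space_Metric_space[OF mmY])
  interpret P: pair_prob_space mX mY
    by (intro pair_prob_space.intro pair_sigma_finite.intro prob_space_imp_sigma_finite
        mm_space_prob_space[OF mmX] mm_space_prob_space[OF mmY])
  have spX: "space mX = S" and spY: "space mY = T"
    using mmX mmY by (simp_all add: mm_space_space)
  have r: "0 < r" "0 < r'"
    using obs_diam_nonneg[OF X.Metric_space_axioms, of mX \<kappa>] ODX
      obs_diam_nonneg[OF Y.Metric_space_axioms, of mY \<kappa>'] ODY
    by (metis ereal_less(2) le_less_trans)+
  let ?M = "section_median mX f"
  let ?N = "median (distr mY borel ?M)"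
  have M_dist: "\<bar>?M y - ?M y'\<bar> \<le> F 0 (dY y y')" if "y \<in> T" "y' \<in> T" for y y'
    using section_median_dist_le[OF mmX f lip that spY[symmetric]] .
  have M_measurable: "?M \<in> borel_measurable mY"
    by (rule F2_lipschitz_measurable[OF mmY F M_dist])
  have "1 - 2 * \<kappa> \<le> measure mX {x\<in>space mX. \<bar>f (x, y) - ?M y\<bar> \<le> 2 * F r 0 + \<eta>}"
    if y: "y \<in> space mY" for y
    unfolding section_median_def spX
  proof (rule concentration_about_median[OF mmX \<kappa> ODX _ _ \<eta>])
    show "(\<lambda>x. f (x, y)) \<in> borel_measurable mX"
      using f y by (simp add: measurable_Pair1')
    fix x x' assume "x \<in> S" "x' \<in> S" "dX x x' < r"
    with lip y r show "\<bar>f (x, y) - f (x', y)\<bar> \<le> 2 * F r 0"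
      using F2_double_fst[OF F X.nonneg[of x x'], of r] by (force simp: prod_metric_def spY)
  qed
  moreover have "1 - 2 * \<kappa>' \<le> measure mY {y\<in>space mY. \<bar>?M y - ?N\<bar> \<le> 2 * F 0 r' + \<eta>}"
    unfolding spY
  proof (rule concentration_about_median[OF mmY \<kappa>' ODY M_measurable _ \<eta>])
    fix y y' assume "y \<in> T" "y' \<in> T" "dY y y' < r'"
    with M_dist[of y y'] r show "\<bar>?M y - ?M y'\<bar> \<le> 2 * F 0 r'"
      using F2_double_snd[OF F Y.nonneg[of y y'], of r'] by simp
  qed
  ultimately have "(1 - 2 * \<kappa>) * (1 - 2 * \<kappa>') \<le> measure (mX \<Otimes>\<^sub>M mY)
      {p\<in>space (mX \<Otimes>\<^sub>M mY). \<bar>f p - ?N\<bar> \<le> (2 * F r 0 + \<eta>) + (2 * F 0 r' + \<eta>)}"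
    using \<kappa> by (intro P.measure_concentration_via_sections[OF f M_measurable]) auto
  moreover have "1 - 2 * (\<kappa> + \<kappa>') \<le> (1 - 2 * \<kappa>) * (1 - 2 * \<kappa>')"
    using mult_nonneg_nonneg[OF \<kappa>(1) \<kappa>'(1)] by (simp add: algebra_simps)
  ultimately have "partial_diam (\<lambda>a b. \<bar>a - b\<bar>) (distr (mX \<Otimes>\<^sub>M mY) borel f) (1 - 2 * (\<kappa> + \<kappa>'))
      \<le> ereal (2 * ((2 * F r 0 + \<eta>) + (2 * F 0 r' + \<eta>)))"
    using F2_nonneg[OF F, of r 0] F2_nonneg[OF F, of 0 r'] r \<eta>
    by (intro partial_diam_distr_le_interval[where c = ?N] f) auto
  then show ?thesis
    by (simp add: algebra_simps)
qed

lemma obs_diam_pair_le: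
  assumes mmX: "mm_space S dX mX" and mmY: "mm_space T dY mY" and F: "F \<in> F2"
    and \<kappa>: "0 \<le> \<kappa>" "\<kappa> < 1/2" and \<kappa>': "0 \<le> \<kappa>'" "\<kappa>' < 1/2"
    and ODX: "obs_diam S dX mX \<kappa> \<le> ereal a" and ODY: "obs_diam T dY mY \<kappa>' \<le> ereal b"
  shows "obs_diam (S \<times> T) (prod_metric F dX dY) (mX \<Otimes>\<^sub>M mY) (2 * (\<kappa> + \<kappa>'))
           \<le> ereal (4 * F a 0 + 4 * F 0 b)"
proof -
  have "0 \<le> a" "0 \<le> b"
    using order_trans[OF obs_diam_nonneg[OF mm_space_Metric_space[OF mmX]] ODX]
      order_trans[OF obs_diam_nonneg[OF mm_space_Metric_space[OF mmY]] ODY] by simp_all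
  let ?g = "\<lambda>t. 4 * F (a + t) 0 + 4 * F 0 (b + t) + 4 * t"
  have "((\<lambda>t. ereal (?g t)) \<longlongrightarrow> ereal (?g 0)) (at_right 0)"
    using \<open>0 \<le> a\<close> \<open>0 \<le> b\<close>
    by (intro tendsto_ereal tendsto_intros F2_tendsto[OF F]
        eventually_mono[OF eventually_at_right_less[of "0::real"]]) auto
  moreover have "\<forall>\<^sub>F t in at_right 0.
      obs_diam (S \<times> T) (prod_metric F dX dY) (mX \<Otimes>\<^sub>M mY) (2 * (\<kappa> + \<kappa>')) \<le> ereal (?g t)"
  proof (rule eventually_mono[OF eventually_at_right_less], rule obs_diam_le)
    fix t :: real and f assume "0 < t" and f: "f \<in> borel_measurable (mX \<Otimes>\<^sub>M mY)"
      "\<forall>p\<in>S \<times> T. \<forall>q\<in>S \<times> T. \<bar>f p - f q\<bar> \<le> prod_metric F dX dY p q"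
    have "obs_diam S dX mX \<kappa> < ereal (a + t)" "obs_diam T dY mY \<kappa>' < ereal (b + t)"
      using ODX ODY \<open>0 < t\<close> by (auto intro: le_less_trans)
    then show "partial_diam (\<lambda>a b. \<bar>a - b\<bar>) (distr (mX \<Otimes>\<^sub>M mY) borel f) (1 - 2 * (\<kappa> + \<kappa>'))
        \<le> ereal (?g t)"
      by (rule partial_diam_pair_le[OF mmX mmY F \<kappa> \<kappa>' _ _ \<open>0 < t\<close> f])
  qed
  ultimately show ?thesis
    by (intro tendsto_lowerbound) (auto simp: F2_zero)
qed

theorem mainTheorem9:
  fixes S :: "'a set" and dX :: "'a \<Rightarrow> 'a \<Rightarrow> real" and mX :: "'a measure"
    and T :: "'b set" and dY :: "'b \<Rightarrow> 'b \<Rightarrow> real" and mY :: "'b measure"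
    and F :: "real \<Rightarrow> real \<Rightarrow> real" and \<kappa> \<kappa>' :: real
  assumes "mm_space S dX mX" and "mm_space T dY mY" and "F \<in> F2"
    and "0 < \<kappa>" and "\<kappa> < 1" and "0 < \<kappa>'" and "\<kappa>' < 1/4"
  shows "obs_diam (S \<times> T) (prod_metric F dX dY) (mX \<Otimes>\<^sub>M mY) (2 * (\<kappa> + \<kappa>'))
           \<le> 4 * ereal (F (real_of_ereal (obs_diam S dX mX \<kappa>)) 0)
             + 8 * ereal (F 0 (real_of_ereal (obs_diam T dY mY \<kappa>')))"
proof -
  note mmX = assms(1) and mmY = assms(2) and F = assms(3)
  define a where "a = real_of_ereal (obs_diam S dX mX \<kappa>)"
  define b where "b = real_of_ereal (obs_diam T dY mY \<kappa>')"
  have "0 \<le> obs_diam S dX mX \<kappa>" "0 \<le> obs_diam T dY mY \<kappa>'"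
    using mmX mmY by (simp_all add: obs_diam_nonneg mm_space_Metric_space)
  \<comment> \<open>Finiteness matters: \<open>real_of_ereal \<infinity> = 0\<close>.\<close>
  with obs_diam_finite[OF mmX assms(4)] obs_diam_finite[OF mmY assms(6)]
  have ODX: "obs_diam S dX mX \<kappa> = ereal a" and ODY: "obs_diam T dY mY \<kappa>' = ereal b"
    and "0 \<le> a" "0 \<le> b"
    unfolding a_def b_def by (auto simp: ereal_real' real_of_ereal_pos)
  have "obs_diam (S \<times> T) (prod_metric F dX dY) (mX \<Otimes>\<^sub>M mY) (2 * (\<kappa> + \<kappa>'))
      \<le> ereal (4 * F a 0 + 8 * F 0 b)"
  proof (cases "\<kappa> + \<kappa>' < 1/2")
    case True
    with assms have "obs_diam (S \<times> T) (prod_metric F dX dY) (mX \<Otimes>\<^sub>M mY) (2 * (\<kappa> + \<kappa>'))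
        \<le> ereal (4 * F a 0 + 4 * F 0 b)"
      by (intro obs_diam_pair_le[OF mmX mmY F]) (auto simp: ODX ODY)
    also have "\<dots> \<le> ereal (4 * F a 0 + 8 * F 0 b)"
      using F2_nonneg[OF F, of 0 b] \<open>0 \<le> b\<close> by simp
    finally show ?thesis .
  next
    case False
    then have "obs_diam (S \<times> T) (prod_metric F dX dY) (mX \<Otimes>\<^sub>M mY) (2 * (\<kappa> + \<kappa>')) \<le> 0"
      by (intro obs_diam_nonpos) simp
    also have "0 \<le> ereal (4 * F a 0 + 8 * F 0 b)"
      using F2_nonneg[OF F, of a 0] F2_nonneg[OF F, of 0 b] \<open>0 \<le> a\<close> \<open>0 \<le> b\<close> by simp
    finally show ?thesis .
  qed
  then show ?thesis
    by (simp add: a_def b_def)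
qed

end
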